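(* Let $\phi$ and $\psi$ be linear formulae on variable sets $\mathcal{V}_1$ and $\mathcal{V}_2$ respectively, and let $\mathsf r:\phi\to\psi$ be a linear inference. Then there is a linear inference $\mathsf r':\phi'\to\psi'$ with $\phi'$ and $\psi'$ linear formulae on $\mathcal{V}_1\cap\mathcal{V}_2$ such that $\mathsf r$ is $\{\mathsf{s},\mathsf{m},\mathsf r'\}$-derivable with units.
   Context: Fix a countably infinite set of variables. Linear formulae on a finite set $\mathcal{V}$ of variables are defined inductively: - $\top,\bot$ are linear formulae on $\emptyset$. - $x$ and $\neg x$ are linear formulae on $\{x\}$. - If $\phi$ is on $\mathcal{V}_1$, $\psi$ is on $\mathcal{V}_2$ and $\mathcal{V}_1\cap\mathcal{V}_2=\emptyset$, then $\phi\lor\psi$ and $\phi\land\psi$ are on $\mathcal{V}_1\cup\mathcal{V}_2$. Formulae are evaluated under Boolean assignments as usual. A linear inference $\phi\to\psi$ is a pair of linear formulae (possibly on different variable sets) such that every assignment satisfying $\phi$ satisfies $\psi$. A congruence is an equivalence relation closed under $\land$- and $\lor$-contexts on either side. - $\sim_{\mathsf{ac}}$ is the smallest congruence containing commutativity and associativity of $\land,\lor$. - $\sim_{\mathsf{u}}$ is the smallest congruence containing $\phi\land\top\sim\phi$, $\top\land\phi\sim\phi$, $\phi\lor\bot\sim\phi$, $\bot\lor\phi\sim\phi$, $\phi\land\bot\sim\bot$, $\bot\land\phi\sim\bot$, $\phi\lor\top\sim\top$, $\top\lor\phi\sim\top$. - $\sim_{\mathsf{acu}}$ is the smallest congruence containing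 both. For a set $S$ of linear inferences, $\to_S$ is the smallest relation containing $S$ and closed under substitution (of linear formulae for variables, keeping linearity) and contexts. Write $\phi\rightsquigarrow_{S\mathsf u}\psi$ if $\phi\sim_{\mathsf{acu}}\phi'\to_S\psi'\sim_{\mathsf{acu}}\psi$ for some $\phi',\psi'$. An inference $\phi\to\psi$ is $S$-derivable with units if $\phi,\psi$ are related by the reflexive-transitive closure of $\rightsquigarrow_{S\mathsf u}\cup\sim_{\mathsf{acu}}$. Switch $\mathsf{s}$ is $x\land(y\lor z)\to(x\land y)\lor z$; medial $\mathsf{m}$ is $(w\land x)\lor(y\land z)\to(w\lor y)\land(x\lor z)$. *)

theory Defs
  imports Main
begin

datatype 'v frm = Top | Bot | Var 'v | NVar 'v | And "'v frm" "'v frm" | Or "'v frm" "'v frm"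

fun vars :: "'v frm \<Rightarrow> 'v set" where
  "vars Top = {}" | "vars Bot = {}" | "vars (Var x) = {x}" | "vars (NVar x) = {x}"
| "vars (And a b) = vars a \<union> vars b" | "vars (Or a b) = vars a \<union> vars b"

fun linear :: "'v frm \<Rightarrow> bool" where
  "linear Top = True" | "linear Bot = True" | "linear (Var x) = True" | "linear (NVar x) = True"
| "linear (And a b) = (linear a \<and> linear b \<and> vars a \<inter> vars b = {})"
| "linear (Or a b) = (linear a \<and> linear b \<and> vars a \<inter> vars b = {})"

definition linear_on :: "'v frm \<Rightarrow> 'v set \<Rightarrow> bool" where
  "linear_on \<phi> V \<longleftrightarrow> linear \<phi> \<and> vars \<phi> = V"

fun eval :: "('v \<Rightarrow> bool) \<Rightarrow> 'v frm \<Rightarrow> bool" where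
  "eval \<sigma> Top = True" | "eval \<sigma> Bot = False" | "eval \<sigma> (Var x) = \<sigma> x"
| "eval \<sigma> (NVar x) = (\<not> \<sigma> x)"
| "eval \<sigma> (And a b) = (eval \<sigma> a \<and> eval \<sigma> b)"
| "eval \<sigma> (Or a b) = (eval \<sigma> a \<or> eval \<sigma> b)"

definition linear_inference :: "'v frm \<Rightarrow> 'v frm \<Rightarrow> bool" where
  "linear_inference \<phi> \<psi> \<longleftrightarrow> linear \<phi> \<and> linear \<psi> \<and> (\<forall>\<sigma>. eval \<sigma> \<phi> \<longrightarrow> eval \<sigma> \<psi>)"

fun neg :: "'v frm \<Rightarrow> 'v frm" where
  "neg Top = Bot" | "neg Bot = Top" | "neg (Var x) = NVar x" | "neg (NVar x) = Var x"
| "neg (And a b) = Or (neg a) (neg b)" | "neg (Or a b) = And (neg a) (neg b)"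

fun subst :: "('v \<Rightarrow> 'v frm) \<Rightarrow> 'v frm \<Rightarrow> 'v frm" where
  "subst s Top = Top" | "subst s Bot = Bot" | "subst s (Var x) = s x"
| "subst s (NVar x) = neg (s x)"
| "subst s (And a b) = And (subst s a) (subst s b)"
| "subst s (Or a b) = Or (subst s a) (subst s b)"

inductive acu :: "'v frm \<Rightarrow> 'v frm \<Rightarrow> bool" where
  refl: "linear a \<Longrightarrow> acu a a"
| sym: "acu a b \<Longrightarrow> acu b a"
| trans: "acu a b \<Longrightarrow> acu b c \<Longrightarrow> acu a c"
| and_comm: "linear (And a b) \<Longrightarrow> acu (And a b) (And b a)"
| or_comm: "linear (Or a b) \<Longrightarrow> acu (Or a b) (Or b a)"
| and_assoc: "linear (And a (And b c)) \<Longrightarrow> acu (And a (And b c)) (And (And a b) c)"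
| or_assoc: "linear (Or a (Or b c)) \<Longrightarrow> acu (Or a (Or b c)) (Or (Or a b) c)"
| and_top_r: "linear a \<Longrightarrow> acu (And a Top) a"
| and_top_l: "linear a \<Longrightarrow> acu (And Top a) a"
| or_bot_r: "linear a \<Longrightarrow> acu (Or a Bot) a"
| or_bot_l: "linear a \<Longrightarrow> acu (Or Bot a) a"
| and_bot_r: "linear a \<Longrightarrow> acu (And a Bot) Bot"
| and_bot_l: "linear a \<Longrightarrow> acu (And Bot a) Bot"
| or_top_r: "linear a \<Longrightarrow> acu (Or a Top) Top"
| or_top_l: "linear a \<Longrightarrow> acu (Or Top a) Top"
| ctx_and_l: "acu a b \<Longrightarrow> linear (And a c) \<Longrightarrow> linear (And b c) \<Longrightarrow> acu (And a c) (And b c)"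
| ctx_and_r: "acu a b \<Longrightarrow> linear (And c a) \<Longrightarrow> linear (And c b) \<Longrightarrow> acu (And c a) (And c b)"
| ctx_or_l: "acu a b \<Longrightarrow> linear (Or a c) \<Longrightarrow> linear (Or b c) \<Longrightarrow> acu (Or a c) (Or b c)"
| ctx_or_r: "acu a b \<Longrightarrow> linear (Or c a) \<Longrightarrow> linear (Or c b) \<Longrightarrow> acu (Or c a) (Or c b)"

inductive rstep :: "('v frm \<times> 'v frm) set \<Rightarrow> 'v frm \<Rightarrow> 'v frm \<Rightarrow> bool" for S where
  base: "(a, b) \<in> S \<Longrightarrow> rstep S a b"
| sub: "rstep S a b \<Longrightarrow> linear (subst s a) \<Longrightarrow> linear (subst s b)
        \<Longrightarrow> rstep S (subst s a) (subst s b)"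
| ctx_and_l: "rstep S a b \<Longrightarrow> linear (And a c) \<Longrightarrow> linear (And b c) \<Longrightarrow> rstep S (And a c) (And b c)"
| ctx_and_r: "rstep S a b \<Longrightarrow> linear (And c a) \<Longrightarrow> linear (And c b) \<Longrightarrow> rstep S (And c a) (And c b)"
| ctx_or_l: "rstep S a b \<Longrightarrow> linear (Or a c) \<Longrightarrow> linear (Or b c) \<Longrightarrow> rstep S (Or a c) (Or b c)"
| ctx_or_r: "rstep S a b \<Longrightarrow> linear (Or c a) \<Longrightarrow> linear (Or c b) \<Longrightarrow> rstep S (Or c a) (Or c b)"

definition rstep_u :: "('v frm \<times> 'v frm) set \<Rightarrow> 'v frm \<Rightarrow> 'v frm \<Rightarrow> bool" where
  "rstep_u S a b \<longleftrightarrow> (\<exists>a' b'. acu a a' \<and> rstep S a' b' \<and> acu b' b)"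

definition derivable_u :: "('v frm \<times> 'v frm) set \<Rightarrow> 'v frm \<Rightarrow> 'v frm \<Rightarrow> bool" where
  "derivable_u S a b \<longleftrightarrow> (\<lambda>x y. rstep_u S x y \<or> acu x y)\<^sup>*\<^sup>* a b"

definition switch :: "nat frm \<times> nat frm" where
  "switch = (And (Var 0) (Or (Var 1) (Var 2)), Or (And (Var 0) (Var 1)) (Var 2))"

definition medial :: "nat frm \<times> nat frm" where
  "medial = (Or (And (Var 0) (Var 1)) (And (Var 2) (Var 3)),
             And (Or (Var 0) (Var 2)) (Or (Var 1) (Var 3)))"

end

theory Submission
  imports Defs
begin

text \<open>Let \<open>\<phi>'\<close> be \<open>\<phi>\<close> with every literal on a variable outside \<open>V2\<close> replaced by \<open>\<top>\<close>, and
  \<open>\<psi>'\<close> be \<open>\<psi>\<close> with every literal on a variable outside \<open>V1\<close> replaced by \<open>\<bottom>\<close>. As each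
  variable occurs once in a linear formula, \<open>\<phi>'\<close> holds under \<open>\<sigma>\<close> iff \<open>\<phi>\<close> holds under some
  modification of \<open>\<sigma>\<close> off \<open>V2\<close>, and \<open>\<psi>'\<close> iff \<open>\<psi>\<close> holds under every modification of \<open>\<sigma>\<close>
  off \<open>V1\<close>; hence \<open>\<phi>' \<rightarrow> \<psi>'\<close> is sound. Switch alone rewrites any \<open>a\<close> to \<open>\<top>\<close>, via
  \<open>a \<sim> a \<and> (\<bottom> \<or> \<top>) \<rightarrow> (a \<and> \<bottom>) \<or> \<top> \<sim> \<top>\<close>, and dually \<open>\<bottom>\<close> to \<open>a\<close>; applied inside
  contexts this derives \<open>\<phi> \<rightarrow> \<phi>'\<close> and \<open>\<psi>' \<rightarrow> \<psi>\<close>.\<close>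

fun replace_lits :: "'v set \<Rightarrow> 'v frm \<Rightarrow> 'v frm \<Rightarrow> 'v frm" where
  "replace_lits X c Top = Top"
| "replace_lits X c Bot = Bot"
| "replace_lits X c (Var x) = (if x \<in> X then c else Var x)"
| "replace_lits X c (NVar x) = (if x \<in> X then c else NVar x)"
| "replace_lits X c (And a b) = And (replace_lits X c a) (replace_lits X c b)"
| "replace_lits X c (Or a b) = Or (replace_lits X c a) (replace_lits X c b)"

lemma vars_replace_lits: "vars c = {} \<Longrightarrow> vars (replace_lits X c a) = vars a - X"
  by (induction a) auto

lemma linear_replace_lits:
  "linear c \<Longrightarrow> vars c = {} \<Longrightarrow> linear a \<Longrightarrow> linear (replace_lits X c a)"
  by (induction a) (auto simp: vars_replace_lits)

lemma linear_on_replace_lits: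
  "linear_on a V \<Longrightarrow> linear c \<Longrightarrow> vars c = {} \<Longrightarrow> linear_on (replace_lits X c a) (V - X)"
  by (simp add: linear_on_def linear_replace_lits vars_replace_lits)

lemma eval_cong: "(\<And>v. v \<in> vars a \<Longrightarrow> \<sigma> v = \<tau> v) \<Longrightarrow> eval \<sigma> a = eval \<tau> a"
  by (induction a) auto

lemma eval_merge:
  assumes "vars a \<inter> vars b = {}"
  shows "eval (\<lambda>v. if v \<in> vars a then \<tau> v else \<rho> v) a = eval \<tau> a"
    and "eval (\<lambda>v. if v \<in> vars a then \<tau> v else \<rho> v) b = eval \<rho> b"
  by (rule eval_cong; use assms in auto)+

lemma eval_replace_lits:
  assumes "linear a" and "vars c = {}"
  shows "\<exists>\<tau>. (\<forall>v. v \<notin> X \<longrightarrow> \<tau> v = \<sigma> v) \<and> eval \<tau> a = eval \<sigma> (replace_lits X c a)"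
  using assms
proof (induction a)
  case (Var x)
  show ?case by (rule exI[of _ "if x \<in> X then \<sigma>(x := eval \<sigma> c) else \<sigma>"]) auto
next
  case (NVar x)
  show ?case by (rule exI[of _ "if x \<in> X then \<sigma>(x := \<not> eval \<sigma> c) else \<sigma>"]) auto
next
  case (And a b)
  then obtain \<tau> \<rho> where "\<forall>v. v \<notin> X \<longrightarrow> \<tau> v = \<sigma> v" "eval \<tau> a = eval \<sigma> (replace_lits X c a)"
    and "\<forall>v. v \<notin> X \<longrightarrow> \<rho> v = \<sigma> v" "eval \<rho> b = eval \<sigma> (replace_lits X c b)"
    by auto
  with eval_merge[of a b \<tau> \<rho>] And.prems show ?case
    by (intro exI[of _ "\<lambda>v. if v \<in> vars a then \<tau> v else \<rho> v"]) auto
next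
  case (Or a b)
  then obtain \<tau> \<rho> where "\<forall>v. v \<notin> X \<longrightarrow> \<tau> v = \<sigma> v" "eval \<tau> a = eval \<sigma> (replace_lits X c a)"
    and "\<forall>v. v \<notin> X \<longrightarrow> \<rho> v = \<sigma> v" "eval \<rho> b = eval \<sigma> (replace_lits X c b)"
    by auto
  with eval_merge[of a b \<tau> \<rho>] Or.prems show ?case
    by (intro exI[of _ "\<lambda>v. if v \<in> vars a then \<tau> v else \<rho> v"]) auto
qed auto

lemma linear_inference_replace_lits:
  assumes "linear_on \<phi> V1" and "linear_on \<psi> V2" and "linear_inference \<phi> \<psi>"
  shows "linear_inference (replace_lits (V1 - V2) Top \<phi>) (replace_lits (V2 - V1) Bot \<psi>)"
proof -
  have lin: "linear \<phi>" "linear \<psi>" and vars: "vars \<phi> = V1" "vars \<psi> = V2"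
    using assms(1,2) by (auto simp: linear_on_def)
  have "eval \<sigma> (replace_lits (V2 - V1) Bot \<psi>)" if \<phi>': "eval \<sigma> (replace_lits (V1 - V2) Top \<phi>)" for \<sigma>
  proof -
    obtain \<tau> where \<tau>: "\<forall>v. v \<notin> V1 - V2 \<longrightarrow> \<tau> v = \<sigma> v" "eval \<tau> \<phi>"
      using eval_replace_lits[OF lin(1), of Top "V1 - V2" \<sigma>] \<phi>' by auto
    obtain \<rho> where \<rho>: "\<forall>v. v \<notin> V2 - V1 \<longrightarrow> \<rho> v = \<sigma> v"
      "eval \<rho> \<psi> = eval \<sigma> (replace_lits (V2 - V1) Bot \<psi>)"
      using eval_replace_lits[OF lin(2), of Bot "V2 - V1" \<sigma>] by auto
    define \<mu> where "\<mu> v = (if v \<in> V1 - V2 then \<tau> v else \<rho> v)" for v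
    have "eval \<mu> \<phi> = eval \<tau> \<phi>"
      by (rule eval_cong) (use \<tau> \<rho> vars in \<open>auto simp: \<mu>_def\<close>)
    with \<tau> assms(3) have "eval \<mu> \<psi>"
      by (auto simp: linear_inference_def)
    moreover have "eval \<mu> \<psi> = eval \<rho> \<psi>"
      by (rule eval_cong) (use vars in \<open>auto simp: \<mu>_def\<close>)
    ultimately show ?thesis using \<rho> by simp
  qed
  then show ?thesis
    by (simp add: linear_inference_def linear_replace_lits lin)
qed

declare acu.trans [trans]

text \<open>A derivation can be put into a linear context only if none of its intermediate formulas
  shares a variable with the context, so derivations are tracked together with a bound \<open>V\<close>
  on the variables they use.\<close>

definition step_within :: "('v frm \<times> 'v frm) set \<Rightarrow> 'v set \<Rightarrow> 'v frm \<Rightarrow> 'v frm \<Rightarrow> bool" where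
  "step_within S V a b \<longleftrightarrow>
     (acu a b \<or> rstep S a b) \<and> linear a \<and> linear b \<and> vars a \<subseteq> V \<and> vars b \<subseteq> V"

lemma derivable_u_if_steps_within: "(step_within S V)\<^sup>*\<^sup>* a b \<Longrightarrow> derivable_u S a b"
  unfolding derivable_u_def
  by (rule mono_rtranclp[rule_format]) (auto simp: step_within_def rstep_u_def intro: acu.refl)

lemma step_within_ctx:
  assumes "step_within S V a b" and "linear c" and "vars c \<subseteq> W" and "V \<inter> W = {}"
    and "K \<in> {And, Or}"
  shows "step_within S (V \<union> W) (K a c) (K b c)" and "step_within S (V \<union> W) (K c a) (K c b)"
proof -
  have disj: "vars a \<inter> vars c = {}" "vars b \<inter> vars c = {}"
    using assms(1,3,4) by (auto simp: step_within_def)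
  have "acu a b \<or> rstep S a b"
    using assms(1) by (simp add: step_within_def)
  then have "(acu (K a c) (K b c) \<or> rstep S (K a c) (K b c))
      \<and> (acu (K c a) (K c b) \<or> rstep S (K c a) (K c b))"
    using assms(1,2,5) disj
    by (elim disjE) (auto simp: step_within_def Int_commute
        intro: acu.ctx_and_l acu.ctx_and_r acu.ctx_or_l acu.ctx_or_r
          rstep.ctx_and_l rstep.ctx_and_r rstep.ctx_or_l rstep.ctx_or_r)
  then show "step_within S (V \<union> W) (K a c) (K b c)" "step_within S (V \<union> W) (K c a) (K c b)"
    using assms disj by (auto simp: step_within_def Int_commute)
qed

lemma steps_within_ctx:
  assumes "(step_within S V)\<^sup>*\<^sup>* a b" and "linear c" and "vars c \<subseteq> W" and "V \<inter> W = {}"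
    and "K \<in> {And, Or}"
  shows "(step_within S (V \<union> W))\<^sup>*\<^sup>* (K a c) (K b c)"
    and "(step_within S (V \<union> W))\<^sup>*\<^sup>* (K c a) (K c b)"
  using assms(1)
  by (induction rule: rtranclp_induct)
     (auto intro: rtranclp.rtrancl_into_rtrancl step_within_ctx[OF _ assms(2-5)])

lemma steps_within_congr:
  assumes "(step_within S V)\<^sup>*\<^sup>* a a'" and "(step_within S W)\<^sup>*\<^sup>* b b'" and "V \<inter> W = {}"
    and "linear a'" and "vars a' \<subseteq> V" and "linear b" and "vars b \<subseteq> W" and "K \<in> {And, Or}"
  shows "(step_within S (V \<union> W))\<^sup>*\<^sup>* (K a b) (K a' b')"
proof -
  have "(step_within S (V \<union> W))\<^sup>*\<^sup>* (K a b) (K a' b)"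
    using steps_within_ctx(1)[OF assms(1,6,7,3,8)] .
  moreover have "(step_within S (W \<union> V))\<^sup>*\<^sup>* (K a' b) (K a' b')"
    using steps_within_ctx(2)[OF assms(2,4,5) _ assms(8)] assms(3) by blast
  ultimately show ?thesis
    by (simp add: Un_commute)
qed

lemma rstep_switch:
  assumes "switch \<in> S" and "linear (And a (Or b c))"
  shows "rstep S (And a (Or b c)) (Or (And a b) c)"
proof -
  let ?s = "\<lambda>n::nat. if n = 0 then a else if n = 1 then b else c"
  have "rstep S (And (Var 0) (Or (Var 1) (Var 2))) (Or (And (Var 0) (Var 1)) (Var 2))"
    using assms(1) by (auto simp: switch_def intro: rstep.base)
  from rstep.sub[OF this, of ?s] show ?thesis
    using assms(2) by auto
qed

lemma steps_within_to_Top: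
  assumes "switch \<in> S" and "linear a"
  shows "(step_within S (vars a))\<^sup>*\<^sup>* a Top"
proof -
  have "acu a (And a Top)"
    using assms(2) by (rule acu.sym[OF acu.and_top_r])
  also have "acu \<dots> (And a (Or Bot Top))"
    using assms(2) by (intro acu.ctx_and_r acu.sym[OF acu.or_bot_l]) simp_all
  finally have "step_within S (vars a) a (And a (Or Bot Top))"
    using assms(2) by (simp add: step_within_def)
  moreover have "step_within S (vars a) (And a (Or Bot Top)) (Or (And a Bot) Top)"
    using rstep_switch[OF assms(1)] assms(2) by (simp add: step_within_def)
  moreover have "step_within S (vars a) (Or (And a Bot) Top) Top"
    using assms(2) by (simp add: step_within_def acu.or_top_r)
  ultimately show ?thesis
    by (meson rtranclp.rtrancl_into_rtrancl rtranclp.rtrancl_refl)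
qed

lemma steps_within_from_Bot:
  assumes "switch \<in> S" and "linear a"
  shows "(step_within S (vars a))\<^sup>*\<^sup>* Bot a"
proof -
  have "acu (Or (And Bot Top) a) (Or Bot a)"
    using assms(2) by (intro acu.ctx_or_l acu.and_top_r) simp_all
  also have "acu \<dots> a"
    using assms(2) by (rule acu.or_bot_l)
  finally have "step_within S (vars a) (Or (And Bot Top) a) a"
    using assms(2) by (simp add: step_within_def)
  moreover have "step_within S (vars a) (And Bot (Or Top a)) (Or (And Bot Top) a)"
    using rstep_switch[OF assms(1)] assms(2) by (simp add: step_within_def)
  moreover have "step_within S (vars a) Bot (And Bot (Or Top a))"
    using assms(2) by (simp add: step_within_def acu.sym acu.and_bot_l)
  ultimately show ?thesis
    by (meson converse_rtranclp_into_rtranclp rtranclp.rtrancl_refl)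
qed

lemma steps_within_replace_lits_Top:
  assumes "switch \<in> S"
  shows "linear a \<Longrightarrow> (step_within S (vars a))\<^sup>*\<^sup>* a (replace_lits X Top a)"
proof (induction a)
  case (Var x)
  show ?case
    using steps_within_to_Top[OF assms, of "Var x"] by simp
next
  case (NVar x)
  show ?case
    using steps_within_to_Top[OF assms, of "NVar x"] by simp
next
  case (And a b)
  then show ?case
    using steps_within_congr[of S "vars a" a _ "vars b" b _ And]
    by (simp add: linear_replace_lits vars_replace_lits Diff_subset)
next
  case (Or a b)
  then show ?case
    using steps_within_congr[of S "vars a" a _ "vars b" b _ Or]
    by (simp add: linear_replace_lits vars_replace_lits Diff_subset)
qed simp_all

lemma steps_within_replace_lits_Bot:
  assumes "switch \<in> S"
  shows "linear a \<Longrightarrow> (step_within S (vars a))\<^sup>*\<^sup>* (replace_lits X Bot a) a"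
proof (induction a)
  case (Var x)
  show ?case
    using steps_within_from_Bot[OF assms, of "Var x"] by simp
next
  case (NVar x)
  show ?case
    using steps_within_from_Bot[OF assms, of "NVar x"] by simp
next
  case (And a b)
  then show ?case
    using steps_within_congr[of S "vars a" _ a "vars b" _ b And]
    by (simp add: linear_replace_lits vars_replace_lits Diff_subset)
next
  case (Or a b)
  then show ?case
    using steps_within_congr[of S "vars a" _ a "vars b" _ b Or]
    by (simp add: linear_replace_lits vars_replace_lits Diff_subset)
qed simp_all

theorem proposition2p14:
  fixes \<phi> \<psi> :: "nat frm" and V1 V2 :: "nat set"
  assumes "linear_on \<phi> V1" and "linear_on \<psi> V2"
    and "linear_inference \<phi> \<psi>"
  shows "\<exists>\<phi>' \<psi>'. linear_on \<phi>' (V1 \<inter> V2) \<and> linear_on \<psi>' (V1 \<inter> V2)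
            \<and> linear_inference \<phi>' \<psi>'
            \<and> derivable_u {switch, medial, (\<phi>', \<psi>')} \<phi> \<psi>"
proof (intro exI conjI)
  let ?\<phi>' = "replace_lits (V1 - V2) Top \<phi>" and ?\<psi>' = "replace_lits (V2 - V1) Bot \<psi>"
  let ?S = "{switch, medial, (?\<phi>', ?\<psi>')}"
  show \<phi>': "linear_on ?\<phi>' (V1 \<inter> V2)" and \<psi>': "linear_on ?\<psi>' (V1 \<inter> V2)"
    using linear_on_replace_lits[OF assms(1), of Top "V1 - V2"]
      linear_on_replace_lits[OF assms(2), of Bot "V2 - V1"]
    by (simp_all add: Diff_Diff_Int Int_commute)
  show "linear_inference ?\<phi>' ?\<psi>'"
    using assms by (rule linear_inference_replace_lits)
  have "derivable_u ?S \<phi> ?\<phi>'"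
    using assms(1) unfolding linear_on_def
    by (auto intro!: derivable_u_if_steps_within[OF steps_within_replace_lits_Top])
  moreover have "derivable_u ?S ?\<phi>' ?\<psi>'"
    using \<phi>' \<psi>' unfolding derivable_u_def rstep_u_def linear_on_def
    by (blast intro: acu.refl rstep.base)
  moreover have "derivable_u ?S ?\<psi>' \<psi>"
    using assms(2) unfolding linear_on_def
    by (auto intro!: derivable_u_if_steps_within[OF steps_within_replace_lits_Bot])
  ultimately show "derivable_u ?S \<phi> \<psi>"
    unfolding derivable_u_def by (meson rtranclp_trans)
qed

end
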